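(* Let $n\ge 2$, let $(x_1,\dots,x_{n+1})$ be the standard coordinates on $\mathbb{R}^{n+1}$, and let $(y_1,\dots,y_{n+1})$ be another global coordinate system on $\mathbb{R}^{n+1}$ such that the coordinate transformation $(x_1,\dots,x_{n+1})\mapsto(y_1,\dots,y_{n+1})$ is a $C^2$ diffeomorphism of $\mathbb{R}^{n+1}$. Suppose that for every $C^2$ function $\varphi$ on $\mathbb{R}^{n+1}$, $\varphi$ satisfies $\sum_{i=1}^n \frac{\partial^2 \varphi}{\partial x_i^2} - \frac{\partial^2 \varphi}{\partial x_{n+1}^2} = 0$ everywhere if and only if $\varphi$ (expressed in the $y$-coordinates) satisfies $\sum_{i=1}^n \frac{\partial^2 \varphi}{\partial y_i^2} - \frac{\partial^2 \varphi}{\partial y_{n+1}^2} = 0$ everywhere. Then the coordinate transformation $(x_1,\dots,x_{n+1})\mapsto(y_1,\dots,y_{n+1})$ is $C^\infty$. *)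

theory Defs
  imports "HOL-Analysis.Analysis"
begin

definition partial :: "'m::finite \<Rightarrow> (real^'m \<Rightarrow> real) \<Rightarrow> real^'m \<Rightarrow> real" where
  "partial i f x = deriv (\<lambda>t. f (x + t *\<^sub>R axis i 1)) 0"

fun Ck :: "nat \<Rightarrow> (real^'m::finite \<Rightarrow> real) \<Rightarrow> bool" where
  "Ck 0 f = continuous_on UNIV f"
| "Ck (Suc k) f = (continuous_on UNIV f \<and>
      (\<forall>i x. (\<lambda>t. f (x + t *\<^sub>R axis i 1)) differentiable (at 0)) \<and>
      (\<forall>i. Ck k (partial i f)))"

definition Cinf :: "(real^'m::finite \<Rightarrow> real) \<Rightarrow> bool" where
  "Cinf f = (\<forall>k. Ck k f)"

definition Ck_map :: "nat \<Rightarrow> (real^'m::finite \<Rightarrow> real^'m) \<Rightarrow> bool" where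
  "Ck_map k F = (\<forall>j. Ck k (\<lambda>x. F x $ j))"

definition Cinf_map :: "(real^'m::finite \<Rightarrow> real^'m) \<Rightarrow> bool" where
  "Cinf_map F = (\<forall>j. Cinf (\<lambda>x. F x $ j))"

definition C2_diffeomorphism :: "(real^'m::finite \<Rightarrow> real^'m) \<Rightarrow> bool" where
  "C2_diffeomorphism F = (bij F \<and> Ck_map 2 F \<and> Ck_map 2 (inv F))"

text \<open>Wave operator on R^{n+1} = real^('n + unit): space coordinates Inl i, time coordinate Inr ().\<close>
definition wave :: "(real^('n::finite + unit) \<Rightarrow> real) \<Rightarrow> real^('n + unit) \<Rightarrow> real" where
  "wave \<phi> x = (\<Sum>i\<in>UNIV. partial (Inl i) (partial (Inl i) \<phi>) x)
               - partial (Inr ()) (partial (Inr ()) \<phi>) x"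

end

theory Submission
  imports Defs
begin

(* Write f_j = y_j \<circ> F for the components of F.
   Applying the hypothesis to the test functions y_j, y_j y_k (j \<noteq> k) and
   \<epsilon>_j y_j^2 - \<epsilon>_k y_k^2, which are waves, and to y_j^2, which is not, shows that
   every f_j is a wave and that the Jacobian of F is conformal for the Minkowski
   form: \<langle>df_j, df_k\<rangle> = \<epsilon>_j \<delta>_jk L, with a conformal factor L that is not
   identically zero.  An algebraic computation with Christoffel-type symbols shows
   that in dimension \<noteq> 2 a conformal harmonic map has dL = 0 and vanishing second
   derivatives wherever L \<noteq> 0.  Hence L^2 has vanishing gradient everywhere, so L is
   a nonzero constant, the Jacobian of F is constant, and F is affine, thus C^\<infinity>. *)

section \<open>Coordinate partial derivatives\<close>

definition coord_differentiable :: "(real^'m::finite \<Rightarrow> real) \<Rightarrow> bool" where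
  "coord_differentiable f = (\<forall>i x. (\<lambda>t. f (x + t *\<^sub>R axis i 1)) differentiable (at 0))"

lemma Ck_Suc:
  "Ck (Suc k) f \<longleftrightarrow> continuous_on UNIV f \<and> coord_differentiable f \<and> (\<forall>i. Ck k (partial i f))"
  by (simp add: coord_differentiable_def)

declare Ck.simps(2)[simp del]

lemma Ck_continuous: "Ck k f \<Longrightarrow> continuous_on UNIV f"
  by (cases k) (auto simp: Ck_Suc)

lemma Ck2_D:
  assumes "Ck 2 f"
  shows "coord_differentiable f" "coord_differentiable (partial a f)"
    "Ck 1 (partial a f)" "continuous_on UNIV (partial b (partial a f))"
  using assms by (auto simp: numeral_2_eq_2 Ck_Suc)

lemma partial_DERIV:
  assumes "coord_differentiable f"
  shows "((\<lambda>t. f (x + t *\<^sub>R axis i 1)) has_real_derivative partial i f x) (at 0)"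
  using assms unfolding coord_differentiable_def partial_def
  by (simp add: DERIV_deriv_iff_real_differentiable)

lemma partial_DERIV_at:
  assumes "coord_differentiable f"
  shows "((\<lambda>t. f (x + t *\<^sub>R axis i 1)) has_real_derivative
           partial i f (x + s *\<^sub>R axis i 1)) (at s)"
proof -
  have "((\<lambda>h. f ((x + s *\<^sub>R axis i 1) + h *\<^sub>R axis i 1)) has_real_derivative
          partial i f (x + s *\<^sub>R axis i 1)) (at 0)"
    by (rule partial_DERIV[OF assms])
  moreover have "(\<lambda>h. f ((x + s *\<^sub>R axis i 1) + h *\<^sub>R axis i 1)) = (\<lambda>h. f (x + (h + s) *\<^sub>R axis i 1))"
    by (auto simp: algebra_simps)
  ultimately show ?thesis using DERIV_shift[of "\<lambda>t. f (x + t *\<^sub>R axis i 1)" _ 0 s] by simp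
qed

lemma partial_unique:
  "((\<lambda>t. f (x + t *\<^sub>R axis i 1)) has_real_derivative D) (at 0) \<Longrightarrow> partial i f x = D"
  unfolding partial_def by (rule DERIV_imp_deriv)

lemma coord_differentiable_const: "coord_differentiable (\<lambda>x. c)"
  unfolding coord_differentiable_def by simp

lemma coord_differentiable_add:
  "coord_differentiable f \<Longrightarrow> coord_differentiable g \<Longrightarrow> coord_differentiable (\<lambda>x. f x + g x)"
  unfolding coord_differentiable_def by auto

lemma coord_differentiable_mult:
  "coord_differentiable f \<Longrightarrow> coord_differentiable g \<Longrightarrow> coord_differentiable (\<lambda>x. f x * g x)"
  unfolding coord_differentiable_def by auto

lemma partial_const: "partial i (\<lambda>x. c) x = 0"
  by (rule partial_unique) simp

lemma partial_add:
  "coord_differentiable f \<Longrightarrow> coord_differentiable g \<Longrightarrow>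
     partial i (\<lambda>x. f x + g x) x = partial i f x + partial i g x"
  by (rule partial_unique) (intro DERIV_add partial_DERIV)

lemma partial_mult:
  "coord_differentiable f \<Longrightarrow> coord_differentiable g \<Longrightarrow>
     partial i (\<lambda>x. f x * g x) x = partial i f x * g x + f x * partial i g x"
  by (rule partial_unique)
    (use DERIV_mult[OF partial_DERIV[of f x i] partial_DERIV[of g x i]] in \<open>simp add: mult.commute\<close>)

lemma partial_cmult:
  "coord_differentiable f \<Longrightarrow> partial i (\<lambda>x. c * f x) x = c * partial i f x"
  by (rule partial_unique) (intro DERIV_cmult partial_DERIV)

lemma coord_line: "(\<lambda>t. (x + t *\<^sub>R axis i 1) $ j) = (\<lambda>t. x $ j + t * (if j = i then 1 else 0))"
  by (auto simp: axis_def)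

lemma partial_coord: "partial i (\<lambda>y. y $ j) x = (if j = i then 1 else 0)"
  by (rule partial_unique, unfold coord_line) (auto intro!: derivative_eq_intros)

lemma Ck_mono: "Ck (Suc k) f \<Longrightarrow> Ck k f"
proof (induction k arbitrary: f)
  case 0 then show ?case by (simp add: Ck_Suc)
next
  case (Suc k) then show ?case by (simp only: Ck_Suc) blast
qed

lemma Ck_const: "Ck k (\<lambda>x::real^'m::finite. c)"
proof (induction k arbitrary: c)
  case 0 then show ?case by simp
next
  case (Suc k)
  have "partial i (\<lambda>x. c) = (\<lambda>x::real^'m. 0)" for i by (rule ext) (rule partial_const)
  then show ?case using Suc.IH by (simp add: Ck_Suc coord_differentiable_const)
qed

lemma Ck_add: "Ck k f \<Longrightarrow> Ck k g \<Longrightarrow> Ck k (\<lambda>x. f x + g x)"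
proof (induction k arbitrary: f g)
  case 0 then show ?case by (auto intro: continuous_intros)
next
  case (Suc k)
  have "partial i (\<lambda>x. f x + g x) = (\<lambda>x. partial i f x + partial i g x)" for i
    using Suc.prems by (intro ext partial_add) (auto simp: Ck_Suc)
  then show ?case
    using Suc by (auto simp: Ck_Suc intro: continuous_intros coord_differentiable_add)
qed

lemma Ck_mult: "Ck k f \<Longrightarrow> Ck k g \<Longrightarrow> Ck k (\<lambda>x. f x * g x)"
proof (induction k arbitrary: f g)
  case 0 then show ?case by (auto intro: continuous_intros)
next
  case (Suc k)
  have "partial i (\<lambda>x. f x * g x) = (\<lambda>x. partial i f x * g x + f x * partial i g x)" for i
    using Suc.prems by (intro ext partial_mult) (auto simp: Ck_Suc)
  moreover have "Ck k f" "Ck k g" using Suc.prems Ck_mono by blast+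
  ultimately show ?case
    using Suc by (auto simp: Ck_Suc intro!: continuous_intros coord_differentiable_mult Ck_add)
qed

lemma Ck_sum: "finite S \<Longrightarrow> (\<And>a. a \<in> S \<Longrightarrow> Ck k (f a)) \<Longrightarrow> Ck k (\<lambda>x. \<Sum>a\<in>S. f a x)"
  by (induction S rule: finite_induct) (simp_all add: Ck_const Ck_add)

lemma Ck_coord: "Ck k (\<lambda>y. y $ j)"
proof (cases k)
  case 0 then show ?thesis by (simp add: continuous_on_component)
next
  case (Suc m)
  have "partial i (\<lambda>y. y $ j) = (\<lambda>x. if j = i then 1 else 0)" for i
    by (rule ext) (rule partial_coord)
  moreover have "coord_differentiable (\<lambda>y. y $ j)"
    unfolding coord_differentiable_def coord_line by simp
  ultimately show ?thesis using Suc by (simp add: Ck_Suc Ck_const continuous_on_component)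
qed

section \<open>Symmetry of second derivatives\<close>

lemma mixed_difference_MVT:
  assumes f: "Ck 2 f" and h: "h > 0"
  shows "\<exists>p. dist p x \<le> 2*h \<and>
    f (x + h *\<^sub>R axis a 1 + h *\<^sub>R axis c 1) - f (x + h *\<^sub>R axis a 1) - f (x + h *\<^sub>R axis c 1) + f x
      = h * h * partial c (partial a f) p"
proof -
  let ?u = "axis a 1 :: real^'a" and ?v = "axis c 1 :: real^'a"
  have df: "coord_differentiable f" and dp: "coord_differentiable (partial a f)"
    using Ck2_D[OF f] by auto
  define \<phi> where "\<phi> s = f ((x + h *\<^sub>R ?v) + s *\<^sub>R ?u) - f (x + s *\<^sub>R ?u)" for s
  have d\<phi>: "DERIV \<phi> s :> partial a f ((x + h *\<^sub>R ?v) + s *\<^sub>R ?u) - partial a f (x + s *\<^sub>R ?u)" for s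
    unfolding \<phi>_def by (intro DERIV_diff partial_DERIV_at df)
  obtain \<sigma> where \<sigma>: "0 < \<sigma>" "\<sigma> < h" and
    e1: "\<phi> h - \<phi> 0 = (h - 0) * (partial a f ((x + h *\<^sub>R ?v) + \<sigma> *\<^sub>R ?u) - partial a f (x + \<sigma> *\<^sub>R ?u))"
    using MVT2[OF h d\<phi>] by blast
  define \<psi> where "\<psi> t = partial a f ((x + \<sigma> *\<^sub>R ?u) + t *\<^sub>R ?v)" for t
  have d\<psi>: "DERIV \<psi> t :> partial c (partial a f) ((x + \<sigma> *\<^sub>R ?u) + t *\<^sub>R ?v)" for t
    unfolding \<psi>_def by (intro partial_DERIV_at dp)
  obtain \<tau> where \<tau>: "0 < \<tau>" "\<tau> < h" and
    e2: "\<psi> h - \<psi> 0 = (h - 0) * partial c (partial a f) ((x + \<sigma> *\<^sub>R ?u) + \<tau> *\<^sub>R ?v)"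
    using MVT2[OF h d\<psi>] by blast
  let ?p = "(x + \<sigma> *\<^sub>R ?u) + \<tau> *\<^sub>R ?v"
  have "dist ?p x = norm (\<sigma> *\<^sub>R ?u + \<tau> *\<^sub>R ?v)" by (simp add: dist_norm)
  also have "\<dots> \<le> norm (\<sigma> *\<^sub>R ?u) + norm (\<tau> *\<^sub>R ?v)" by (rule norm_triangle_ineq)
  also have "\<dots> \<le> 2 * h" using \<sigma> \<tau> by simp
  finally have "dist ?p x \<le> 2*h" .
  moreover have "\<phi> h - \<phi> 0 = f (x + h *\<^sub>R ?u + h *\<^sub>R ?v) - f (x + h *\<^sub>R ?u) - f (x + h *\<^sub>R ?v) + f x"
    unfolding \<phi>_def by (simp add: algebra_simps)
  moreover have "partial a f ((x + h *\<^sub>R ?v) + \<sigma> *\<^sub>R ?u) - partial a f (x + \<sigma> *\<^sub>R ?u) = \<psi> h - \<psi> 0"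
    unfolding \<psi>_def by (simp add: algebra_simps)
  ultimately show ?thesis using e1 e2 by (intro exI[of _ ?p]) (simp add: algebra_simps)
qed

text \<open>Schwarz's theorem: the two mixed differences coincide, and letting h \<rightarrow> 0 the
  continuous mixed partials must agree.\<close>
lemma partial_commute:
  assumes f: "Ck 2 f"
  shows "partial c (partial a f) x = partial a (partial c f) x"
proof (rule ccontr)
  let ?g1 = "partial c (partial a f)" and ?g2 = "partial a (partial c f)"
  assume ne: "?g1 x \<noteq> ?g2 x"
  define e where "e = \<bar>?g1 x - ?g2 x\<bar> / 2"
  have e: "e > 0" using ne by (simp add: e_def)
  have "continuous (at x) ?g1" "continuous (at x) ?g2"
    using Ck2_D(4)[OF f] by (simp_all add: continuous_on_eq_continuous_at)
  then obtain d1 d2 where d1: "d1 > 0" "\<And>y. dist y x < d1 \<Longrightarrow> dist (?g1 y) (?g1 x) < e"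
    and d2: "d2 > 0" "\<And>y. dist y x < d2 \<Longrightarrow> dist (?g2 y) (?g2 x) < e"
    using e unfolding continuous_at_eps_delta by blast
  define h where "h = min d1 d2 / 4"
  have h: "h > 0" using d1 d2 by (simp add: h_def)
  obtain p where p: "dist p x \<le> 2*h" and ep:
    "f (x + h *\<^sub>R axis a 1 + h *\<^sub>R axis c 1) - f (x + h *\<^sub>R axis a 1) - f (x + h *\<^sub>R axis c 1) + f x
      = h * h * ?g1 p"
    using mixed_difference_MVT[OF f h, of x a c] by blast
  obtain q where q: "dist q x \<le> 2*h" and eq:
    "f (x + h *\<^sub>R axis c 1 + h *\<^sub>R axis a 1) - f (x + h *\<^sub>R axis c 1) - f (x + h *\<^sub>R axis a 1) + f x
      = h * h * ?g2 q"
    using mixed_difference_MVT[OF f h, of x c a] by blast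
  have "h * h * ?g1 p = h * h * ?g2 q" using ep eq by (simp add: algebra_simps)
  then have "?g1 p = ?g2 q" using h by simp
  moreover have "dist p x < d1" "dist q x < d2" using p q h d1 d2 by (auto simp: h_def)
  then have "dist (?g1 p) (?g1 x) < e" "dist (?g2 q) (?g2 x) < e" using d1 d2 by auto
  ultimately have "\<bar>?g1 x - ?g2 x\<bar> < 2 * e" unfolding dist_real_def by arith
  then show False by (simp add: e_def)
qed

section \<open>Functions with vanishing gradient\<close>

lemma constant_along_line:
  assumes "coord_differentiable g" "\<And>x. partial i g x = 0"
  shows "g (x + t *\<^sub>R axis i 1) = g x"
proof -
  have "\<forall>s. DERIV (\<lambda>t. g (x + t *\<^sub>R axis i 1)) s :> 0"
    using partial_DERIV_at[OF assms(1)] assms(2) by metis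
  from DERIV_isconst_all[OF this, of t 0] show ?thesis by simp
qed

text \<open>A function with vanishing gradient is constant: walk from x to y along the
  coordinate directions one at a time.\<close>
lemma constant_if_gradient_zero:
  fixes g :: "real^'m::finite \<Rightarrow> real"
  assumes "coord_differentiable g" "\<And>i x. partial i g x = 0"
  shows "g y = g x"
proof -
  have "g (\<chi> i. if i \<in> S then y $ i else x $ i) = g x" if "finite S" for S
    using that
  proof (induction S rule: finite_induct)
    case empty then show ?case by simp
  next
    case (insert c S)
    have "(\<chi> i. if i \<in> insert c S then y $ i else x $ i) =
       (\<chi> i. if i \<in> S then y $ i else x $ i) + (y $ c - x $ c) *\<^sub>R axis c 1"
      using insert.hyps by (auto simp: vec_eq_iff axis_def)
    then show ?case using constant_along_line[OF assms] insert.IH by simp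
  qed
  from this[of UNIV] show ?thesis by simp
qed

lemma Cinf_if_partials_constant:
  assumes "continuous_on UNIV f" "coord_differentiable f" "\<And>b. partial b f = (\<lambda>x. c b)"
  shows "Cinf f"
  unfolding Cinf_def
proof
  fix m show "Ck m f"
    using assms by (cases m) (simp_all add: Ck_Suc Ck_const)
qed

text \<open>If L is stationary at each point where it does not vanish and L is not
  identically zero, then L vanishes nowhere: L^2 has vanishing gradient everywhere.\<close>
lemma nowhere_zero_if_stationary_off_zeros:
  assumes dL: "coord_differentiable L" and x0: "L x0 \<noteq> 0"
    and stat: "\<And>x c. L x \<noteq> 0 \<Longrightarrow> partial c L x = 0"
  shows "L x \<noteq> 0"
proof -
  have "partial c (\<lambda>x. L x * L x) y = 0" for c y
    using partial_mult[OF dL dL, of c y] stat[of y c] by (cases "L y = 0") auto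
  then have "L x * L x = L x0 * L x0"
    by (intro constant_if_gradient_zero coord_differentiable_mult dL)
  then show ?thesis using x0 by auto
qed

lemma nonzero_near_on_line:
  assumes "coord_differentiable g" "g x \<noteq> 0"
  shows "eventually (\<lambda>t. g (x + t *\<^sub>R axis c 1) \<noteq> 0) (nhds 0)"
proof -
  have "((\<lambda>t. g (x + t *\<^sub>R axis c 1)) \<longlongrightarrow> g x) (at 0)"
    using DERIV_isCont[OF partial_DERIV[OF assms(1)]] by (simp add: isCont_def)
  then have "eventually (\<lambda>t. g (x + t *\<^sub>R axis c 1) \<noteq> 0) (at 0)"
    using assms(2) by (rule tendsto_imp_eventually_ne)
  then show ?thesis using assms(2) by (simp add: eventually_nhds_conv_at)
qed

lemma DERIV_zero_if_eventually_zero: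
  fixes h :: "real \<Rightarrow> real"
  assumes "DERIV h 0 :> D" "eventually (\<lambda>t. h t = 0) (nhds 0)"
  shows "D = 0"
proof -
  have "DERIV (\<lambda>t. 0::real) 0 :> D"
    using assms(1) DERIV_cong_ev[OF refl assms(2) refl] by simp
  then show ?thesis using DERIV_const DERIV_unique by blast
qed

section \<open>The d'Alembertian of a signature\<close>

definition dalembert :: "('m::finite \<Rightarrow> real) \<Rightarrow> (real^'m \<Rightarrow> real) \<Rightarrow> real^'m \<Rightarrow> real" where
  "dalembert e f x = (\<Sum>a\<in>UNIV. e a * partial a (partial a f) x)"

definition metric_pairing ::
    "('m::finite \<Rightarrow> real) \<Rightarrow> (real^'m \<Rightarrow> real) \<Rightarrow> (real^'m \<Rightarrow> real) \<Rightarrow> real^'m \<Rightarrow> real" where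
  "metric_pairing e f g x = (\<Sum>a\<in>UNIV. e a * partial a f x * partial a g x)"

lemma Ck_metric_pairing: "Ck 2 f \<Longrightarrow> Ck 2 g \<Longrightarrow> Ck 1 (metric_pairing e f g)"
  unfolding metric_pairing_def by (intro Ck_sum Ck_mult Ck_const Ck2_D) auto

lemma dalembert_mult:
  assumes f: "Ck 2 f" and g: "Ck 2 g"
  shows "dalembert e (\<lambda>x. f x * g x) x = f x * dalembert e g x + g x * dalembert e f x + 2 * metric_pairing e f g x"
proof -
  note D = Ck2_D[OF f] Ck2_D[OF g]
  have "partial a (\<lambda>x. f x * g x) = (\<lambda>x. partial a f x * g x + f x * partial a g x)" for a
    by (rule ext, rule partial_mult) (use D in auto)
  moreover have "partial a (\<lambda>x. partial a f x * g x + f x * partial a g x) x =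
      partial a (partial a f) x * g x + 2 * (partial a f x * partial a g x)
      + f x * partial a (partial a g) x" for a
    using D by (simp add: partial_add partial_mult coord_differentiable_mult)
  ultimately show ?thesis unfolding dalembert_def metric_pairing_def
    by (simp add: algebra_simps sum.distrib sum_distrib_left)
qed

text \<open>Linearity, needed for the test function \<epsilon>_j y_j^2 - \<epsilon>_k y_k^2.\<close>
lemma dalembert_lin:
  assumes f: "Ck 2 f" and g: "Ck 2 g"
  shows "dalembert e (\<lambda>x. c * f x + d * g x) x = c * dalembert e f x + d * dalembert e g x"
proof -
  note D = Ck2_D[OF f] Ck2_D[OF g]
  have "partial a (\<lambda>x. c * f x + d * g x) = (\<lambda>x. c * partial a f x + d * partial a g x)" for a
    using D by (auto simp: partial_add coord_differentiable_mult coord_differentiable_const partial_cmult)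
  moreover have "partial a (\<lambda>x. c * partial a f x + d * partial a g x) x =
      c * partial a (partial a f) x + d * partial a (partial a g) x" for a
    using D by (auto simp: partial_add coord_differentiable_mult coord_differentiable_const partial_cmult)
  ultimately show ?thesis unfolding dalembert_def
    by (simp add: algebra_simps sum.distrib sum_distrib_left)
qed

lemma dalembert_coord: "dalembert e (\<lambda>y. y $ j) x = 0"
proof -
  have "partial a (\<lambda>y. y $ j) = (\<lambda>x. if j = a then 1 else 0)" for a
    by (rule ext) (rule partial_coord)
  then show ?thesis unfolding dalembert_def by (simp add: partial_const)
qed

lemma metric_pairing_coord:
  "metric_pairing e (\<lambda>y. y $ j) (\<lambda>y. y $ k) x = (if j = k then e j else 0)"
  unfolding metric_pairing_def partial_coord
  by (simp add: if_distrib[of "\<lambda>u. _ * u"] if_distrib[of "\<lambda>u. u * _"] cong: if_cong)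

definition minkowski :: "'n + unit \<Rightarrow> real" where
  "minkowski a = (case a of Inl _ \<Rightarrow> 1 | Inr _ \<Rightarrow> -1)"

lemma minkowski_sq: "minkowski a * minkowski a = 1"
  by (cases a) (auto simp: minkowski_def)

lemma sum_plus_unit: "(\<Sum>a\<in>UNIV. g a) = (\<Sum>i\<in>UNIV. g (Inl i)) + g (Inr ())"
  for g :: "'n::finite + unit \<Rightarrow> real"
proof -
  have "(\<Sum>a\<in>UNIV. g a) = (\<Sum>a\<in>UNIV <+> UNIV. g a)" by simp
  also have "\<dots> = (\<Sum>i\<in>UNIV. g (Inl i)) + (\<Sum>u\<in>(UNIV::unit set). g (Inr u))"
    by (subst sum.Plus) (auto simp: o_def)
  finally show ?thesis by (simp add: UNIV_unit)
qed

lemma wave_eq_dalembert: "wave \<phi> x = dalembert minkowski \<phi> x"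
  unfolding wave_def dalembert_def by (subst sum_plus_unit) (simp add: minkowski_def)

lemma card_plus_unit: "CARD('n::finite + unit) = CARD('n) + 1"
  by (simp add: card_Plus flip: UNIV_Plus_UNIV)

section \<open>Linear algebra of conformal Jacobians\<close>

text \<open>If the rows of a square matrix M are \<epsilon>-orthogonal with common \<epsilon>-norm L \<noteq> 0,
  i.e. M^T \<epsilon> M = L \<epsilon>, then M is invertible with inverse \<epsilon> M^T \<epsilon> / L, hence also
  M \<epsilon> M^T = L \<epsilon>: the columns are \<epsilon>-orthogonal with the same norm.\<close>
lemma orthogonal_columns_from_rows:
  fixes M :: "'m::finite \<Rightarrow> 'm \<Rightarrow> real" and e :: "'m \<Rightarrow> real"
  assumes e: "\<And>a. e a * e a = 1" and L: "L \<noteq> 0"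
    and row: "\<And>j k. (\<Sum>a\<in>UNIV. e a * M a j * M a k) = (if j = k then e j * L else 0)"
  shows "(\<Sum>j\<in>UNIV. e j * M a j * M b j) = (if a = b then e a * L else 0)"
proof -
  define A :: "real^'m^'m" where "A = (\<chi> j a. M a j)"
  define B :: "real^'m^'m" where "B = (\<chi> a k. e a * M a k * e k / L)"
  have "(\<Sum>a\<in>UNIV. M a j * (e a * M a k * e k / L)) = (if j = k then 1 else 0)" for j k
  proof -
    have "(\<Sum>a\<in>UNIV. M a j * (e a * M a k * e k / L)) = (e k / L) * (\<Sum>a\<in>UNIV. e a * M a j * M a k)"
      by (simp add: sum_distrib_left algebra_simps)
    also have "\<dots> = (if j = k then 1 else 0)" using row[of j k] L e[of k] by simp
    finally show ?thesis .
  qed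
  then have "A ** B = mat 1"
    by (simp add: A_def B_def matrix_matrix_mult_def mat_def vec_eq_iff)
  then have "B ** A = mat 1" by (simp add: matrix_left_right_inverse)
  then have "(\<Sum>j\<in>UNIV. e a * M a j * e j / L * M b j) = (if a = b then 1 else 0)"
    by (simp add: A_def B_def matrix_matrix_mult_def mat_def vec_eq_iff)
  then have "(e a * L) * (\<Sum>j\<in>UNIV. e a * M a j * e j / L * M b j) = (if a = b then e a * L else 0)"
    by simp
  moreover have "(e a * L) * (\<Sum>j\<in>UNIV. e a * M a j * e j / L * M b j) = (\<Sum>j\<in>UNIV. e j * M a j * M b j)"
  proof -
    have ea: "e a * (e a * z) = z" for z using e[of a] by (metis mult.assoc mult_1)
    show ?thesis using L by (simp add: sum_distrib_left algebra_simps ea)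
  qed
  ultimately show ?thesis by simp
qed

text \<open>Let Y_ja = \<partial>_a f_j be a conformal
  Jacobian (\<epsilon>-orthogonal rows of norm L \<noteq> 0) and X_jca = \<partial>_c \<partial>_a f_j its symmetric
  second derivatives, with each f_j harmonic (\<epsilon>-trace of X_j zero).  Differentiating
  the column relations gives equation E.  Solving E for the Christoffel-type symbols
  S_abc = \<Sigma>_j \<epsilon>_j X_jab Y_jc and taking the \<epsilon>-trace yields (2 - N) dL = 0; so in
  dimension N \<noteq> 2 we get dL = 0, then S = 0, and since Y is invertible, X = 0.\<close>
lemma conformal_second_order_vanish:
  fixes X :: "'m::finite \<Rightarrow> 'm \<Rightarrow> 'm \<Rightarrow> real" and Y :: "'m \<Rightarrow> 'm \<Rightarrow> real"
    and e Lc :: "'m \<Rightarrow> real"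
  assumes e: "\<And>a. e a * e a = 1" and L: "L \<noteq> 0" and N: "CARD('m) \<noteq> 2"
    and sym: "\<And>j a b. X j a b = X j b a"
    and E: "\<And>a b c. (\<Sum>j\<in>UNIV. e j * (X j c a * Y j b + Y j a * X j c b)) =
                       (if a = b then e a * Lc c else 0)"
    and harmonic: "\<And>j. (\<Sum>a\<in>UNIV. e a * X j a a) = 0"
    and row: "\<And>j k. (\<Sum>a\<in>UNIV. e a * Y j a * Y k a) = (if j = k then e j * L else 0)"
  shows "Lc c = 0" "X k a b = 0"
proof -
  define S where "S a b c = (\<Sum>j\<in>UNIV. e j * X j a b * Y j c)" for a b c
  define R where "R p q r = (if p = q then e p * Lc r else 0)" for p q r
  have E': "S c a b + S c b a = R a b c" for a b c
    using E[where a=a and b=b and c=c] unfolding S_def R_def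
    by (simp add: sum.distrib[symmetric] algebra_simps)
  have Ssym: "S a b c = S b a c" for a b c unfolding S_def using sym by simp
  have "2 * S a b c = R b c a + R a c b - R a b c" for a b c
    using E'[where c=a and a=b and b=c] E'[where c=b and a=a and b=c] E'[where c=c and a=a and b=b]
      Ssym[of a c b] Ssym[of b c a] Ssym[of b a c]
    by linarith
  then have Sf: "S a b c = (R b c a + R a c b - R a b c) / 2" for a b c
    by (simp add: field_simps)
  have trace0: "(\<Sum>a\<in>UNIV. e a * S a a c) = 0" for c
  proof -
    have "(\<Sum>a\<in>UNIV. e a * S a a c) = (\<Sum>a\<in>UNIV. \<Sum>j\<in>UNIV. e j * Y j c * (e a * X j a a))"
      unfolding S_def by (simp add: sum_distrib_left algebra_simps)
    also have "\<dots> = (\<Sum>j\<in>UNIV. e j * Y j c * (\<Sum>a\<in>UNIV. e a * X j a a))"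
      by (subst sum.swap) (simp add: sum_distrib_left)
    finally show ?thesis using harmonic by simp
  qed
  have trace: "(\<Sum>a\<in>UNIV. e a * S a a c) = (2 - real CARD('m)) * Lc c / 2" for c
  proof -
    have "(\<Sum>a\<in>UNIV. e a * S a a c) = (\<Sum>a\<in>UNIV. (e a * R a c a + e a * R a c a - e a * R a a c) / 2)"
      unfolding Sf by (simp add: algebra_simps)
    also have "\<dots> = ((\<Sum>a\<in>UNIV. e a * R a c a) + (\<Sum>a\<in>UNIV. e a * R a c a)
                       - (\<Sum>a\<in>UNIV. e a * R a a c)) / 2"
      by (simp only: sum_divide_distrib[symmetric] sum_subtractf sum.distrib)
    also have "(\<Sum>a\<in>UNIV. e a * R a c a) = Lc c"
      unfolding R_def using e[of c] by (simp add: if_distrib[of "\<lambda>u. _ * u"] cong: if_cong)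
    also have "(\<Sum>a\<in>UNIV. e a * R a a c) = real CARD('m) * Lc c"
      unfolding R_def by (simp add: mult.assoc[symmetric] e)
    finally show ?thesis by (simp add: algebra_simps)
  qed
  have Lc0: "Lc c = 0" for c
    using trace0[of c] trace[of c] N by simp
  then show "Lc c = 0" .
  have S0: "S a b c = 0" for a b c unfolding Sf R_def by (simp add: Lc0)
  have "0 = (\<Sum>c\<in>UNIV. e c * S a b c * Y k c)" by (simp add: S0)
  also have "\<dots> = (\<Sum>c\<in>UNIV. \<Sum>j\<in>UNIV. e j * X j a b * (e c * Y j c * Y k c))"
    unfolding S_def by (simp add: sum_distrib_left sum_distrib_right algebra_simps)
  also have "\<dots> = (\<Sum>j\<in>UNIV. e j * X j a b * (\<Sum>c\<in>UNIV. e c * Y j c * Y k c))"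
    by (subst sum.swap) (simp add: sum_distrib_left)
  also have "\<dots> = X k a b * L"
    unfolding row using e[of k] by (simp add: if_distrib[of "\<lambda>u. _ * u"] cong: if_cong)
  finally show "X k a b = 0" using L by simp
qed

section \<open>Rigidity of conformal harmonic maps\<close>

lemma conformal_columns:
  fixes f :: "'m::finite \<Rightarrow> real^'m \<Rightarrow> real"
  assumes e: "\<And>a. e a * e a = 1" and Lx: "L x \<noteq> 0"
    and conf: "\<And>j k x. metric_pairing e (f j) (f k) x = (if j = k then e j * L x else 0)"
  shows "(\<Sum>j\<in>UNIV. e j * partial a (f j) x * partial b (f j) x) = (if a = b then e a * L x else 0)"
  using orthogonal_columns_from_rows[where M = "\<lambda>a j. partial a (f j) x", OF e Lx] conf
  unfolding metric_pairing_def by simp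

text \<open>Differentiating the column relations along a coordinate line near a point where
  L \<noteq> 0 (they hold on a neighbourhood of it there).\<close>
lemma conformal_columns_derivative:
  fixes f :: "'m::finite \<Rightarrow> real^'m \<Rightarrow> real"
  assumes e: "\<And>a. e a * e a = 1" and f: "\<And>j. Ck 2 (f j)"
    and conf: "\<And>j k x. metric_pairing e (f j) (f k) x = (if j = k then e j * L x else 0)"
    and dL: "coord_differentiable L" and Lx: "L x \<noteq> 0"
  shows "(\<Sum>j\<in>UNIV. e j * (partial c (partial a (f j)) x * partial b (f j) x
                           + partial a (f j) x * partial c (partial b (f j)) x))
         = (if a = b then e a * partial c L x else 0)"
proof -
  define c0 where "c0 = (if a = b then e a else 0)"
  define p where "p t = x + t *\<^sub>R axis c 1" for t
  define h where "h t = (\<Sum>j\<in>UNIV. e j * (partial a (f j) (p t) * partial b (f j) (p t)))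
                        - c0 * L (p t)" for t
  have "DERIV (\<lambda>t. partial a (f j) (p t) * partial b (f j) (p t)) 0 :>
      partial c (partial a (f j)) x * partial b (f j) x + partial c (partial b (f j)) x * partial a (f j) x"
    for j using DERIV_mult[OF partial_DERIV[OF Ck2_D(2)[OF f]] partial_DERIV[OF Ck2_D(2)[OF f]]]
    by (simp add: p_def)
  moreover have "DERIV (\<lambda>t. L (p t)) 0 :> partial c L x"
    using partial_DERIV[OF dL] by (simp add: p_def)
  ultimately have "DERIV h 0 :> (\<Sum>j\<in>UNIV. e j * (partial c (partial a (f j)) x * partial b (f j) x
      + partial c (partial b (f j)) x * partial a (f j) x)) - c0 * partial c L x"
    unfolding h_def by (intro DERIV_diff DERIV_sum DERIV_cmult)
  moreover have "eventually (\<lambda>t. h t = 0) (nhds 0)"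
    using nonzero_near_on_line[OF dL Lx, of c]
  proof eventually_elim
    case (elim t)
    then show ?case using conformal_columns[OF e elim conf, of a b]
      by (simp add: h_def c0_def p_def mult.assoc)
  qed
  ultimately show ?thesis
    by (auto dest!: DERIV_zero_if_eventually_zero simp: c0_def algebra_simps)
qed

lemma conformal_harmonic_rigid_at:
  fixes f :: "'m::finite \<Rightarrow> real^'m \<Rightarrow> real"
  assumes e: "\<And>a. e a * e a = 1" and N: "CARD('m) \<noteq> 2" and f: "\<And>j. Ck 2 (f j)"
    and harmonic: "\<And>j x. dalembert e (f j) x = 0"
    and conf: "\<And>j k x. metric_pairing e (f j) (f k) x = (if j = k then e j * L x else 0)"
    and dL: "coord_differentiable L" and Lx: "L x \<noteq> 0"
  shows "partial c L x = 0" "partial a (partial b (f k)) x = 0"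
proof -
  have sym: "partial a (partial b (f j)) x = partial b (partial a (f j)) x" for j a b
    using partial_commute[OF f] .
  note E = conformal_columns_derivative[OF e f conf dL Lx]
  have harmonic_x: "(\<Sum>a\<in>UNIV. e a * partial a (partial a (f j)) x) = 0" for j
    using harmonic[of j x] unfolding dalembert_def .
  have row: "(\<Sum>a\<in>UNIV. e a * partial a (f j) x * partial a (f k) x) = (if j = k then e j * L x else 0)"
    for j k using conf[of j k x] unfolding metric_pairing_def .
  note vanish = conformal_second_order_vanish[where X = "\<lambda>j c a. partial c (partial a (f j)) x"
      and Y = "\<lambda>j a. partial a (f j) x" and Lc = "\<lambda>c. partial c L x", OF e Lx N sym E harmonic_x row]
  show "partial c L x = 0" "partial a (partial b (f k)) x = 0" using vanish by auto
qed

text \<open>Global rigidity: if L is somewhere nonzero it vanishes nowhere, so the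
  Jacobian is constant and every component is affine, hence C^\<infinity>.\<close>
lemma conformal_harmonic_Cinf:
  fixes f :: "'m::finite \<Rightarrow> real^'m \<Rightarrow> real"
  assumes e: "\<And>a. e a * e a = 1" and N: "CARD('m) \<noteq> 2" and f: "\<And>j. Ck 2 (f j)"
    and harmonic: "\<And>j x. dalembert e (f j) x = 0"
    and conf: "\<And>j k x. metric_pairing e (f j) (f k) x = (if j = k then e j * L x else 0)"
    and dL: "coord_differentiable L" and x0: "L x0 \<noteq> 0"
  shows "Cinf (f k)"
proof -
  note rigid = conformal_harmonic_rigid_at[OF e N f harmonic conf dL]
  have "L x \<noteq> 0" for x
    by (rule nowhere_zero_if_stationary_off_zeros[OF dL x0 rigid(1)])
  then have second_zero: "partial a (partial b (f k)) x = 0" for a b x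
    by (rule rigid(2))
  have "partial b (f k) = (\<lambda>x. partial b (f k) 0)" for b
    by (rule ext, rule constant_if_gradient_zero[OF Ck2_D(2)[OF f] second_zero])
  then show ?thesis
    by (intro Cinf_if_partials_constant[where c = "\<lambda>b. partial b (f k) 0"]
        Ck_continuous[OF f] Ck2_D(1)[OF f])
qed

section \<open>Maps preserving the solutions of the d'Alembertian\<close>

lemma dalembert_preserving_harmonic:
  fixes F :: "real^'m::finite \<Rightarrow> real^'m"
  assumes F: "\<And>j. Ck 2 (\<lambda>x. F x $ j)"
    and pres: "\<And>\<Phi>. Ck 2 (\<lambda>x. \<Phi> (F x)) \<Longrightarrow> (\<forall>x. dalembert e (\<lambda>x. \<Phi> (F x)) x = 0) \<longleftrightarrow> (\<forall>y. dalembert e \<Phi> y = 0)"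
  shows "dalembert e (\<lambda>x. F x $ j) x = 0"
  using pres[of "\<lambda>y. y $ j"] F dalembert_coord by blast

lemma dalembert_preserving_orthogonal:
  fixes F :: "real^'m::finite \<Rightarrow> real^'m"
  assumes F: "\<And>j. Ck 2 (\<lambda>x. F x $ j)"
    and pres: "\<And>\<Phi>. Ck 2 (\<lambda>x. \<Phi> (F x)) \<Longrightarrow> (\<forall>x. dalembert e (\<lambda>x. \<Phi> (F x)) x = 0) \<longleftrightarrow> (\<forall>y. dalembert e \<Phi> y = 0)"
    and jk: "j \<noteq> k"
  shows "metric_pairing e (\<lambda>x. F x $ j) (\<lambda>x. F x $ k) x = 0"
proof -
  have "dalembert e (\<lambda>y. y $ j * y $ k) y = 0" for y
    using jk by (simp add: dalembert_mult[OF Ck_coord Ck_coord] dalembert_coord metric_pairing_coord)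
  then have "dalembert e (\<lambda>x. F x $ j * F x $ k) x = 0"
    using pres[of "\<lambda>y. y $ j * y $ k"] Ck_mult[OF F F] by blast
  then show ?thesis
    by (simp add: dalembert_mult[OF F F] dalembert_preserving_harmonic[OF F pres])
qed

lemma dalembert_preserving_equal_norms:
  fixes F :: "real^'m::finite \<Rightarrow> real^'m"
  assumes e: "\<And>a. e a * e a = 1" and F: "\<And>j. Ck 2 (\<lambda>x. F x $ j)"
    and pres: "\<And>\<Phi>. Ck 2 (\<lambda>x. \<Phi> (F x)) \<Longrightarrow> (\<forall>x. dalembert e (\<lambda>x. \<Phi> (F x)) x = 0) \<longleftrightarrow> (\<forall>y. dalembert e \<Phi> y = 0)"
  shows "e j * metric_pairing e (\<lambda>x. F x $ j) (\<lambda>x. F x $ j) x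
       = e k * metric_pairing e (\<lambda>x. F x $ k) (\<lambda>x. F x $ k) x"
proof -
  have sq: "Ck 2 (\<lambda>y::real^'m. y $ j * y $ j)" for j by (intro Ck_mult Ck_coord)
  have "dalembert e (\<lambda>y. e j * (y $ j * y $ j) + - e k * (y $ k * y $ k)) y = 0" for y
    using dalembert_lin[OF sq[of j] sq[of k], where c = "e j" and d = "- e k" and e = e and x = y] e
    by (simp add: dalembert_mult[OF Ck_coord Ck_coord] dalembert_coord metric_pairing_coord)
  moreover have Fsq: "Ck 2 (\<lambda>x. F x $ j * F x $ j)" for j by (intro Ck_mult F)
  moreover have "Ck 2 (\<lambda>x. e j * (F x $ j * F x $ j) + - e k * (F x $ k * F x $ k))"
    by (intro Ck_add Ck_mult Ck_const Fsq)
  ultimately have "dalembert e (\<lambda>x. e j * (F x $ j * F x $ j) + - e k * (F x $ k * F x $ k)) x = 0"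
    using pres[of "\<lambda>y. e j * (y $ j * y $ j) + - e k * (y $ k * y $ k)"] by blast
  then show ?thesis
    using dalembert_lin[OF Fsq[of j] Fsq[of k], where c = "e j" and d = "- e k" and e = e and x = x]
    by (simp add: dalembert_mult[OF F F] dalembert_preserving_harmonic[OF F pres])
qed

lemma dalembert_preserving_nondegenerate:
  fixes F :: "real^'m::finite \<Rightarrow> real^'m"
  assumes e: "\<And>a. e a * e a = 1" and F: "\<And>j. Ck 2 (\<lambda>x. F x $ j)"
    and pres: "\<And>\<Phi>. Ck 2 (\<lambda>x. \<Phi> (F x)) \<Longrightarrow> (\<forall>x. dalembert e (\<lambda>x. \<Phi> (F x)) x = 0) \<longleftrightarrow> (\<forall>y. dalembert e \<Phi> y = 0)"
  shows "\<exists>x. metric_pairing e (\<lambda>x. F x $ j) (\<lambda>x. F x $ j) x \<noteq> 0"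
proof -
  have "e j \<noteq> 0" using e[of j] by auto
  then have "\<not> (\<forall>y. dalembert e (\<lambda>y. y $ j * y $ j) y = 0)"
    by (simp add: dalembert_mult[OF Ck_coord Ck_coord] dalembert_coord metric_pairing_coord)
  then have "\<not> (\<forall>x. dalembert e (\<lambda>x. F x $ j * F x $ j) x = 0)"
    using pres[of "\<lambda>y. y $ j * y $ j"] Ck_mult[OF F F] by blast
  then show ?thesis
    by (simp add: dalembert_mult[OF F F] dalembert_preserving_harmonic[OF F pres])
qed

lemma dalembert_preserving_conformal:
  fixes F :: "real^'m::finite \<Rightarrow> real^'m"
  assumes e: "\<And>a. e a * e a = 1" and F: "\<And>j. Ck 2 (\<lambda>x. F x $ j)"
    and pres: "\<And>\<Phi>. Ck 2 (\<lambda>x. \<Phi> (F x)) \<Longrightarrow> (\<forall>x. dalembert e (\<lambda>x. \<Phi> (F x)) x = 0) \<longleftrightarrow> (\<forall>y. dalembert e \<Phi> y = 0)"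
  obtains L where "coord_differentiable L" "\<exists>x. L x \<noteq> 0"
    "\<And>j k x. metric_pairing e (\<lambda>x. F x $ j) (\<lambda>x. F x $ k) x = (if j = k then e j * L x else 0)"
proof -
  fix j0 :: 'm
  define L where "L x = e j0 * metric_pairing e (\<lambda>x. F x $ j0) (\<lambda>x. F x $ j0) x" for x
  have "coord_differentiable L"
    using Ck_metric_pairing[OF F[of j0] F[of j0], where e = e] unfolding L_def[abs_def] One_nat_def
    by (intro coord_differentiable_mult coord_differentiable_const) (simp add: Ck_Suc)
  moreover have "\<exists>x. L x \<noteq> 0"
    using dalembert_preserving_nondegenerate[OF e F pres, of j0] e[of j0] by (auto simp: L_def)
  moreover have "metric_pairing e (\<lambda>x. F x $ j) (\<lambda>x. F x $ k) x = (if j = k then e j * L x else 0)"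
    for j k x
  proof (cases "j = k")
    case True
    have "e j * metric_pairing e (\<lambda>x. F x $ j) (\<lambda>x. F x $ j) x = L x"
      unfolding L_def by (rule dalembert_preserving_equal_norms[OF e F pres])
    then have "metric_pairing e (\<lambda>x. F x $ j) (\<lambda>x. F x $ j) x = e j * L x"
      using e[of j] by (metis mult.assoc mult_1)
    with True show ?thesis by simp
  qed (simp add: dalembert_preserving_orthogonal[OF F pres])
  ultimately show ?thesis using that by blast
qed

theorem corollary2p4:
  fixes F :: "real^('n::finite + unit) \<Rightarrow> real^('n + unit)"
  assumes "CARD('n) \<ge> 2"
    and "C2_diffeomorphism F"
    and "\<And>\<phi>. Ck 2 \<phi> \<Longrightarrow>
           ((\<forall>x. wave \<phi> x = 0) \<longleftrightarrow> (\<forall>y. wave (\<phi> \<circ> inv F) y = 0))"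
  shows "Cinf_map F"
proof -
  have F: "Ck 2 (\<lambda>x. F x $ j)" for j
    using assms(2) unfolding C2_diffeomorphism_def Ck_map_def by blast
  have "F (inv F y) = y" for y
    using assms(2) unfolding C2_diffeomorphism_def by (meson bij_is_surj surj_f_inv_f)
  then have "(\<lambda>x. \<Phi> (F x)) \<circ> inv F = \<Phi>" for \<Phi> :: "real^('n + unit) \<Rightarrow> real"
    by (simp add: o_def)
  then have pres: "(\<forall>x. dalembert minkowski (\<lambda>x. \<Phi> (F x)) x = 0) \<longleftrightarrow> (\<forall>y. dalembert minkowski \<Phi> y = 0)"
    if "Ck 2 (\<lambda>x. \<Phi> (F x))" for \<Phi>
    using assms(3)[OF that] by (simp add: wave_eq_dalembert)
  obtain L where dL: "coord_differentiable L" and nonzero: "\<exists>x. L x \<noteq> 0" and conf: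
    "\<And>j k x. metric_pairing minkowski (\<lambda>x. F x $ j) (\<lambda>x. F x $ k) x
               = (if j = k then minkowski j * L x else 0)"
    using dalembert_preserving_conformal[OF minkowski_sq F pres] by metis
  then obtain x0 where x0: "L x0 \<noteq> 0" by blast
  have N: "CARD('n + unit) \<noteq> 2" using assms(1) by (simp add: card_plus_unit)
  have "Cinf (\<lambda>x. F x $ j)" for j
    by (rule conformal_harmonic_Cinf[OF minkowski_sq N F dalembert_preserving_harmonic[OF F pres] conf dL x0])
  then show ?thesis unfolding Cinf_map_def by blast
qed

end
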